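(* Assume the setting, Assumptions (A1)–(A9) and notation described in the context. Let $\delta\in(0,1)$, let $\alpha\in\left(\tfrac12,\tfrac{p+1}{2p}\right)$, set $\epsilon_n=n^{-\alpha}$, and let $\gamma:=\max\{p(\alpha-\tfrac12)-\tfrac12,\ \tfrac12-\alpha\}$ (so $\gamma<0$). Then there exist $C\in\mathbb{R}$ and $N\in\mathbb{N}$ such that \[ \left|\frac{\Pr\{\mathbf{s}_n\in\mathcal{N}_{\epsilon_n}(\mathbf{s}_n^* )\mid \boldsymbol{\theta},\mathbf{y}_{\mathbf{a}n}\}}{(2\epsilon_n\sqrt n)^p}-\phi\!\left[\sqrt n\{\mathbf{s}_n^*-\mathbf{r}_n(\boldsymbol{\theta})\};\ \mathbf{0},\ \mathbf{V}_n(\boldsymbol{\theta})\right]\right|\le C n^{\gamma} \] with probability at least $1-\delta$ for all $n\ge N$ and all $\boldsymbol{\theta}\in\mathcal{T}$. Moreover, this bound is optimized by the choice $\alpha=\frac{2+p}{2(p+1)}$, which gives $\gamma=-\frac{1}{2(p+1)}$.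
   Context: Setting. For each $n$, there are $n$ units with binary treatments $a_i\in\{0,1\}$ and real potential outcomes $y_{0i},y_{1i}$. We consider a triangular array whose $n$-th row is $(\mathbf{a}_n,\mathbf{y}_{\mathbf{a}n})$, where $\mathbf{a}_n\in\{0,1\}^n$ is the treatment assignment vector and $\mathbf{y}_{\mathbf{a}n}$ is the vector of observed potential outcomes (its $i$-th entry is $y_{a_i i}$). No parametric distributional assumption is made on $\mathbf{y}_{\mathbf{a}n}$. (A1) Consistency: the observed outcomes equal $\mathbf{y}_{\mathbf{a}n}$. (A2) Unconfoundedness: $\mathbf{a}_n$ is independent of all potential outcomes. (A3) Known assignment mechanism: $\mathbf{a}_n\sim \mathrm{P}_n$ with $\mathrm{P}_n$ known. The analysis conditions on (fixes) $\mathbf{y}_{\mathbf{a}n}$ and treats the assignment as random with law $\mathrm{P}_n$ independent of $\mathbf{y}_{\mathbf{a}n}$. A treatment effect model $\mathcal{M}_{\boldsymbol{\theta}}$, indexed by $\boldsymbol{\theta}\in\mathcal{T}\subset\mathbb{R}^p$, specifies for each unit independently a (deterministic or stochastic) imputation of the unobserved potential outcome(s) given the observed one, so that for any assignment vector $\tilde{\mathbf{a}}$ it determines (possibly random) potential outcomes $\mathbf{y}_{\tilde{\mathbf{a}}}$ from $\mathbf{y}_{\mathbf{a}n}$ and $\boldsymbol{\theta}$. A statistic $\mathbf{s}_n=\mathbf{f}_n(\mathbf{y}_{\mathbf{a}n},\mathbf{a}_n)\in\mathbb{R}^p$ (same dimension $p$ as $\boldsymbol{\theta}$) is given for a known function $\mathbf{f}_n$;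 $\mathbf{s}_n^*$ denotes its observed value. Its model-based randomization distribution is $\Pr\{\mathbf{s}_n\le \mathbf{s}\mid\boldsymbol{\theta},\mathbf{y}_{\mathbf{a}n}\}:=\Pr\{\mathbf{f}_n(\mathbf{y}_{\tilde{\mathbf{a}}},\tilde{\mathbf{a}})\le\mathbf{s}\mid \boldsymbol{\theta},\mathbf{y}_{\mathbf{a}n}\}$ (componentwise inequality), where $\tilde{\mathbf{a}}\sim\mathrm{P}_n$ is a fresh draw and $\mathbf{y}_{\tilde{\mathbf{a}}}$ is the model-based imputation (randomness from $\tilde{\mathbf a}$ and any stochastic imputation). Expectations, variances and probabilities "given $\boldsymbol{\theta},\mathbf{y}_{\mathbf{a}n}$" refer to this distribution. For $\epsilon>0$, $\mathcal{N}_{\epsilon}(\mathbf{s}^* ):=\{\mathbf{s}\in\mathbb{R}^p:\|\mathbf{s}-\mathbf{s}^*\|_\infty\le\epsilon\}$. $\phi(\cdot;\boldsymbol{\mu},\boldsymbol{\Sigma})$ and $\Phi(\cdot;\boldsymbol{\mu},\boldsymbol{\Sigma})$ are the multivariate Gaussian density and CDF. A prior density $p(\boldsymbol{\theta}\mid\mathbf{y}_{\mathbf{a}n})$ on $\mathcal T$ is given. Convergence in probability ($\overset{p}{\to}$) refers to the randomness of the triangular array. (A4) $\mathbf{r}_n(\boldsymbol{\theta}):=\mathbb{E}(\mathbf{s}_n\mid\boldsymbol{\theta},\mathbf{y}_{\mathbf{a}n})$ and $\mathbf{V}_n(\boldsymbol{\theta}):=n\,\mathrm{Var}(\mathbf{s}_n\mid\boldsymbol{\theta},\mathbf{y}_{\mathbf{a}n})$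 exist for all $n$ and $\boldsymbol{\theta}\in\mathcal T$. (A5) $\mathcal T=\mathrm{supp}(\boldsymbol\theta)\subset\mathbb{R}^p$ is compact. (A6) There is $\mathbf{r}:\mathcal T\to\mathbb{R}^p$ with: (a) $\sqrt n\sup_{\boldsymbol\theta\in\mathcal T}\|\mathbf r_n(\boldsymbol\theta)-\mathbf r(\boldsymbol\theta)\|_\infty\overset{p}{\to}0$; (b) a unique $\boldsymbol\theta^*\in\mathcal T$ with $\mathbf s_n\overset{p}{\to}\mathbf r(\boldsymbol\theta^* )$; (c) $\mathbf r$ twice differentiable on an open neighborhood of $\boldsymbol\theta^*$; (d) the Jacobian $\mathbf r'(\boldsymbol\theta^* )$ is invertible; (e) $\{\mathbf r'(\boldsymbol\theta^* )\}^{-1}\mathbf V(\boldsymbol\theta^* )\{\mathbf r'(\boldsymbol\theta^* )\}^{-\top}$ is positive definite (with $\mathbf V$ from (A7)). (A7) There is $\mathbf V:\mathcal T\to\mathbb R^{p\times p}$ with: (a) $\sup_{\boldsymbol\theta\in\mathcal T}\|\mathbf V_n(\boldsymbol\theta)-\mathbf V(\boldsymbol\theta)\|_{\infty,\infty}\overset{p}{\to}0$; (b) $\mathbf V_{\min}\preceq\mathbf V(\boldsymbol\theta)\preceq\mathbf V_{\max}$ for all $\boldsymbol\theta\in\mathcal T$, for two positive definite matrices $\mathbf V_{\min},\mathbf V_{\max}$; (c) $\mathbf V$ is continuous on an open neighborhood of $\boldsymbol\theta^*$. (A8) (a) There is $C>0$ with $1\{\sup_{\boldsymbol\theta\in\mathcal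 T}p(\boldsymbol\theta\mid\mathbf y_{\mathbf an})\le C\}\overset{p}{\to}1$; (b) there is $C>0$ with $p(\boldsymbol\theta^*\mid\mathbf y_{\mathbf an})\overset{p}{\to}C$; (c) for every $\epsilon>0$ there is $\delta>0$ with $1\{\sup_{\|\boldsymbol\theta-\boldsymbol\theta^*\|_\infty<\delta}|p(\boldsymbol\theta\mid\mathbf y_{\mathbf an})-p(\boldsymbol\theta^*\mid\mathbf y_{\mathbf an})|<\epsilon\}\overset{p}{\to}1$. (A9) Let $\mathbf z_n(\boldsymbol\theta):=\sqrt n\{\mathbf s_n-\mathbf r_n(\boldsymbol\theta)\}$. For every $\delta\in(0,1)$ there exist $C\in\mathbb R$ and $N\in\mathbb N$ such that, with probability at least $1-\delta$, for all $n\ge N$ and $\mathbf z\in\mathbb R^p$: $\sup_{\boldsymbol\theta\in\mathcal T}|\Pr\{\mathbf z_n(\boldsymbol\theta)\le\mathbf z\mid\boldsymbol\theta,\mathbf y_{\mathbf an}\}-\Phi\{\mathbf z;\mathbf 0,\mathbf V_n(\boldsymbol\theta)\}|\le C/\sqrt n$ (the probability inside being the model-based randomization distribution). *)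

theory Defs
  imports "HOL-Analysis.Analysis" "HOL-Probability.Probability"
begin

text \<open>Dimension p is CARD('p); vectors in R^p are real^'p; the order on real^'p
  (library instance) is componentwise.\<close>

definition supnorm :: "real^'p::finite \<Rightarrow> real" where
  "supnorm x = Max (range (\<lambda>i. \<bar>x $ i\<bar>))"

text \<open>Matrix norm induced by the sup-norm (maximum absolute row sum).\<close>
definition matnorm_inf :: "real^'p::finite^'q::finite \<Rightarrow> real" where
  "matnorm_inf A = Max (range (\<lambda>i. \<Sum>j\<in>UNIV. \<bar>A $ i $ j\<bar>))"

definition supball :: "real^'p::finite \<Rightarrow> real \<Rightarrow> (real^'p) set" where
  "supball s e = {x. supnorm (x - s) \<le> e}"

definition pos_def :: "real^'p::finite^'p \<Rightarrow> bool" where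
  "pos_def A \<longleftrightarrow> transpose A = A \<and> (\<forall>x. x \<noteq> 0 \<longrightarrow> x \<bullet> (A *v x) > 0)"

definition loewner_le :: "real^'p::finite^'p \<Rightarrow> real^'p^'p \<Rightarrow> bool" where
  "loewner_le A B \<longleftrightarrow> (\<forall>x. x \<bullet> (A *v x) \<le> x \<bullet> (B *v x))"

definition gauss_pdf :: "real^'p::finite^'p \<Rightarrow> real^'p \<Rightarrow> real" where
  "gauss_pdf V z = exp (- (z \<bullet> (matrix_inv V *v z)) / 2) / sqrt ((2 * pi) ^ CARD('p) * det V)"

definition gauss_cdf :: "real^'p::finite^'p \<Rightarrow> real^'p \<Rightarrow> real" where
  "gauss_cdf V z = (LINT x : {x. x \<le> z} | lborel. gauss_pdf V x)"

text \<open>Q is the (model-based randomization) law of s_n given theta and the data.\<close>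
definition rmean :: "(real^'p::finite) measure \<Rightarrow> real^'p" where
  "rmean Q = (\<chi> i. \<integral>x. x $ i \<partial>Q)"

definition rcov_scaled :: "nat \<Rightarrow> (real^'p::finite) measure \<Rightarrow> real^'p^'p" where
  "rcov_scaled n Q = (\<chi> i j. real n * ((\<integral>x. x $ i * x $ j \<partial>Q) - rmean Q $ i * rmean Q $ j))"

text \<open>"P holds with probability at least 1 - d" (inner probability: P holds on an
  event of probability at least 1 - d).\<close>
definition wp_at_least :: "'w measure \<Rightarrow> ('w \<Rightarrow> bool) \<Rightarrow> real \<Rightarrow> bool" where
  "wp_at_least M P d \<longleftrightarrow> (\<exists>A\<in>sets M. measure M A \<ge> 1 - d \<and> (\<forall>w\<in>A. P w))"

definition event_to_one :: "'w measure \<Rightarrow> (nat \<Rightarrow> 'w \<Rightarrow> bool) \<Rightarrow> bool" where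
  "event_to_one M E \<longleftrightarrow> (\<forall>d>0. eventually (\<lambda>n. wp_at_least M (E n) d) sequentially)"

definition conv_prob_vec :: "'w measure \<Rightarrow> (nat \<Rightarrow> 'w \<Rightarrow> real^'p::finite) \<Rightarrow> real^'p \<Rightarrow> bool" where
  "conv_prob_vec M X c \<longleftrightarrow> (\<forall>e>0. event_to_one M (\<lambda>n w. supnorm (X n w - c) \<le> e))"

definition conv_prob_real :: "'w measure \<Rightarrow> (nat \<Rightarrow> 'w \<Rightarrow> real) \<Rightarrow> real \<Rightarrow> bool" where
  "conv_prob_real M X c \<longleftrightarrow> (\<forall>e>0. event_to_one M (\<lambda>n w. \<bar>X n w - c\<bar> \<le> e))"

definition gamma_rate :: "nat \<Rightarrow> real \<Rightarrow> real" where
  "gamma_rate p a = max (real p * (a - 1/2) - 1/2) (1/2 - a)"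

end

theory Submission
  imports Defs
begin

text \<open>In the normalised coordinates \<open>z = \<surd>n (x - r\<^sub>n(\<theta>))\<close> the event
  \<open>s\<^sub>n \<in> N\<^sub>\<epsilon>(s\<^sub>n\<^sup>*)\<close> is a cube of side \<open>h = 2 \<epsilon> \<surd>n\<close> around \<open>\<surd>n (s\<^sub>n\<^sup>* - r\<^sub>n(\<theta>))\<close>.
  By (A9) the CDF of \<open>z\<close> is within \<open>C/\<surd>n\<close> of the Gaussian one, so by inclusion-exclusion over
  the \<open>2\<^sup>p\<close> corners the mass of every half-open box, and hence (up to a limit) of the cube, is
  within \<open>2\<^sup>p C/\<surd>n\<close> of its Gaussian mass. The Gaussian mass of the cube is \<open>h\<^sup>p\<close> times the
  density at its centre up to a Lipschitz error \<open>O(h\<^sup>p\<^sup>+\<^sup>1)\<close>. Dividing by \<open>h\<^sup>p\<close> leaves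
  \<open>O(h) + O(n\<^sup>-\<^sup>1\<^sup>/\<^sup>2 h\<^sup>-\<^sup>p)\<close>, which is \<open>O(n\<^sup>\<gamma>)\<close> for \<open>\<epsilon> = n\<^sup>-\<^sup>\<alpha>\<close>. The
  constants are uniform in \<open>\<theta>\<close> because by (A7), with high probability, all \<open>V\<^sub>n(\<theta>)\<close> are
  uniformly positive definite, which bounds the Lipschitz constant of the density.\<close>

section \<open>Partial boxes and inclusion-exclusion\<close>

definition partial_box :: "real^'p::finite \<Rightarrow> real^'p \<Rightarrow> 'p set \<Rightarrow> (real^'p) set" where
  "partial_box a b I = {x. x \<le> b \<and> (\<forall>i\<in>I. a$i < x$i)}"

lemma sets_lower_orthant [measurable]: "{x::real^'p::finite. x \<le> z} \<in> sets borel"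
  using closed_interval_left_cart[of z] by (intro borel_closed) (simp add: less_eq_vec_def)

lemma sets_partial_box [measurable]: "partial_box a b I \<in> sets borel"
proof -
  have "partial_box a b I = {x. x \<le> b} \<inter> (\<Inter>i\<in>I. {x. a$i < x$i})"
    by (auto simp: partial_box_def)
  also have "\<dots> \<in> sets borel"
    by (intro sets.Int sets_lower_orthant sets.countable_INT'')
      (auto intro!: borel_open open_Collect_less continuous_intros)
  finally show ?thesis .
qed

lemma partial_box_empty [simp]: "partial_box a b {} = {x. x \<le> b}"
  by (simp add: partial_box_def)

lemma partial_box_UNIV: "partial_box a b UNIV = {x. \<forall>i. a$i < x$i \<and> x$i \<le> b$i}"
  by (auto simp: partial_box_def less_eq_vec_def)

lemma partial_box_subset_lower_orthant: "partial_box a b I \<subseteq> {x. x \<le> b}"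
  by (auto simp: partial_box_def)

lemma partial_box_insert:
  fixes a b :: "real^'p::finite" and j :: 'p
  defines "b' \<equiv> \<chi> i. if i = j then min (a$j) (b$j) else b$i"
  shows "partial_box a b (insert j I) = partial_box a b I - partial_box a b' I"
    and "partial_box a b' I \<subseteq> partial_box a b I"
  by (auto simp: partial_box_def b'_def less_eq_vec_def not_less)

text \<open>Inclusion-exclusion over the coordinates in \<open>I\<close>: each coordinate constraint
  doubles the number of lower orthants involved.\<close>

lemma measure_partial_box_diff_le:
  fixes \<mu> \<nu> :: "(real^'p::finite) measure"
  assumes sets_\<mu>: "sets \<mu> = sets borel" and sets_\<nu>: "sets \<nu> = sets borel"
    and fin_\<mu>: "\<And>z. emeasure \<mu> {x. x \<le> z} \<noteq> \<infinity>"
    and fin_\<nu>: "\<And>z. emeasure \<nu> {x. x \<le> z} \<noteq> \<infinity>"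
    and close: "\<And>z. \<bar>measure \<mu> {x. x \<le> z} - measure \<nu> {x. x \<le> z}\<bar> \<le> e"
    and "finite I"
  shows "\<bar>measure \<mu> (partial_box a b I) - measure \<nu> (partial_box a b I)\<bar> \<le> 2 ^ card I * e"
  using \<open>finite I\<close>
proof (induction I arbitrary: b rule: finite_induct)
  case empty
  then show ?case using close by simp
next
  case (insert j I)
  define b' where "b' = (\<chi> i. if i = j then min (a$j) (b$j) else b$i)"
  have split: "measure M (partial_box a b (insert j I))
      = measure M (partial_box a b I) - measure M (partial_box a b' I)"
    if M: "M = \<mu> \<or> M = \<nu>" for M
  proof -
    have sets_M: "sets M = sets borel" using M sets_\<mu> sets_\<nu> by auto
    have "emeasure M (partial_box a b I) \<le> emeasure M {x. x \<le> b}"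
      using sets_M by (intro emeasure_mono partial_box_subset_lower_orthant) auto
    then have "emeasure M (partial_box a b I) \<noteq> \<infinity>"
      using M fin_\<mu> fin_\<nu> by (auto simp: top_unique)
    then show ?thesis
      unfolding b'_def partial_box_insert(1)
      using sets_M partial_box_insert(2)[of a j b I] by (intro measure_Diff) auto
  qed
  have "\<bar>measure \<mu> (partial_box a b (insert j I)) - measure \<nu> (partial_box a b (insert j I))\<bar>
      \<le> \<bar>measure \<mu> (partial_box a b I) - measure \<nu> (partial_box a b I)\<bar>
        + \<bar>measure \<mu> (partial_box a b' I) - measure \<nu> (partial_box a b' I)\<bar>"
    using split[of \<mu>] split[of \<nu>] by simp
  also have "\<dots> \<le> 2 ^ card I * e + 2 ^ card I * e"
    using insert.IH[of b] insert.IH[of b'] by (rule add_mono)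
  also have "\<dots> = 2 ^ card (insert j I) * e"
    using insert by simp
  finally show ?case .
qed

lemma emeasure_lborel_cbox_cart:
  fixes a b :: "real^'p::finite"
  assumes "a \<le> b"
  shows "emeasure lborel (cbox a b) = ennreal (\<Prod>i\<in>UNIV. b$i - a$i)"
proof -
  have ne: "cbox a b \<noteq> {}"
    using assms by (auto simp: interval_eq_empty_cart not_less less_eq_vec_def)
  then show ?thesis
    using emeasure_eq_ennreal_measure[of lborel "cbox a b"] emeasure_lborel_cbox_finite[of a b]
      content_cbox_cart[OF ne] by (simp add: less_top)
qed

lemma emeasure_lborel_partial_box_UNIV:
  fixes a b :: "real^'p::finite"
  assumes "a \<le> b"
  shows "emeasure lborel (partial_box a b UNIV) = ennreal (\<Prod>i\<in>UNIV. b$i - a$i)"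
proof (rule antisym)
  have "box a b \<subseteq> partial_box a b UNIV"
    by (auto simp: partial_box_UNIV mem_box_cart less_imp_le)
  then have "emeasure lborel (box a b) \<le> emeasure lborel (partial_box a b UNIV)"
    by (intro emeasure_mono) auto
  then show "ennreal (\<Prod>i\<in>UNIV. b$i - a$i) \<le> emeasure lborel (partial_box a b UNIV)"
    using assms emeasure_lborel_cbox_cart[OF assms]
    by (simp add: emeasure_lborel_box_eq emeasure_lborel_cbox_eq)
  have "partial_box a b UNIV \<subseteq> cbox a b"
    by (auto simp: partial_box_UNIV mem_box_cart less_imp_le)
  then have "emeasure lborel (partial_box a b UNIV) \<le> emeasure lborel (cbox a b)"
    by (intro emeasure_mono) auto
  then show "emeasure lborel (partial_box a b UNIV) \<le> ennreal (\<Prod>i\<in>UNIV. b$i - a$i)"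
    using emeasure_lborel_cbox_cart[OF assms] by simp
qed

section \<open>Norms and coercive matrices\<close>

lemma supnorm_le_iff: "supnorm (x::real^'p::finite) \<le> r \<longleftrightarrow> (\<forall>i. \<bar>x$i\<bar> \<le> r)"
  unfolding supnorm_def by (subst Max_le_iff) auto

lemma abs_component_le_supnorm: "\<bar>x$i\<bar> \<le> supnorm (x::real^'p::finite)"
  using supnorm_le_iff by blast

lemma supnorm_nonneg: "0 \<le> supnorm (x::real^'p::finite)"
  using abs_component_le_supnorm abs_ge_zero order_trans by blast

lemma supnorm_le_norm: "supnorm (x::real^'p::finite) \<le> norm x"
  using component_le_norm_cart supnorm_le_iff by blast

lemma norm_le_sqrt_card_mult:
  fixes x :: "real^'p::finite"
  assumes "\<And>i. \<bar>x$i\<bar> \<le> r"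
  shows "norm x \<le> sqrt (real CARD('p)) * r"
proof -
  have r: "0 \<le> r"
    using assms[of undefined] by linarith
  have "norm x = sqrt (\<Sum>i\<in>UNIV. (x$i)^2)"
    by (simp add: norm_vec_def L2_set_def)
  also have "\<dots> \<le> sqrt (\<Sum>i\<in>(UNIV::'p set). r^2)"
  proof (intro real_sqrt_le_mono sum_mono)
    fix i
    show "(x$i)^2 \<le> r^2"
      using assms[of i] r by (metis abs_of_nonneg abs_le_square_iff)
  qed
  also have "\<dots> = sqrt (real CARD('p)) * r"
    using r by (simp add: real_sqrt_mult)
  finally show ?thesis .
qed

lemma norm_le_sqrt_card_supnorm: "norm (x::real^'p::finite) \<le> sqrt (real CARD('p)) * supnorm x"
  using norm_le_sqrt_card_mult abs_component_le_supnorm by blast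

lemma supnorm_matrix_vector_le:
  "supnorm ((A::real^'p::finite^'q::finite) *v y) \<le> matnorm_inf A * supnorm y"
  unfolding supnorm_le_iff
proof
  fix i
  have "\<bar>(A *v y)$i\<bar> \<le> (\<Sum>j\<in>UNIV. \<bar>A$i$j\<bar> * \<bar>y$j\<bar>)"
    unfolding matrix_vector_mult_def by (simp add: abs_mult order_trans[OF sum_abs])
  also have "\<dots> \<le> (\<Sum>j\<in>UNIV. \<bar>A$i$j\<bar>) * supnorm y"
    unfolding sum_distrib_right by (intro sum_mono mult_left_mono abs_component_le_supnorm) auto
  also have "\<dots> \<le> matnorm_inf A * supnorm y"
    unfolding matnorm_inf_def by (intro mult_right_mono Max_ge supnorm_nonneg) auto
  finally show "\<bar>(A *v y)$i\<bar> \<le> matnorm_inf A * supnorm y" .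
qed

definition coercive :: "real \<Rightarrow> real^'p::finite^'p \<Rightarrow> bool" where
  "coercive m V \<longleftrightarrow> (\<forall>y. m * (norm y)^2 \<le> y \<bullet> (V *v y))"

lemma inner_matrix_vector_symmetric:
  fixes A :: "real^'p::finite^'p"
  assumes "transpose A = A"
  shows "u \<bullet> (A *v w) = w \<bullet> (A *v u)"
  by (metis assms dot_lmul_matrix inner_commute vector_transpose_matrix)

lemma transpose_rcov_scaled: "transpose (rcov_scaled n Q) = rcov_scaled n Q"
  by (simp add: rcov_scaled_def transpose_def vec_eq_iff mult.commute)

lemma matrix_inv_invertible:
  assumes "invertible A"
  shows "A ** matrix_inv A = mat 1" and "matrix_inv A ** A = mat 1"
proof -
  have "A ** matrix_inv A = mat 1 \<and> matrix_inv A ** A = mat 1"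
    using assms unfolding invertible_def matrix_inv_def by (rule someI_ex)
  then show "A ** matrix_inv A = mat 1" and "matrix_inv A ** A = mat 1"
    by auto
qed

lemma transpose_matrix_inv_symmetric:
  fixes A :: "real^'p::finite^'p"
  assumes "invertible A" and "transpose A = A"
  shows "transpose (matrix_inv A) = matrix_inv A"
proof -
  have "transpose (matrix_inv A) ** A = mat 1"
    using matrix_inv_invertible(1)[OF assms(1)] assms(2) by (metis matrix_transpose_mul transpose_mat)
  then have "transpose (matrix_inv A) = transpose (matrix_inv A) ** (A ** matrix_inv A)"
    using matrix_inv_invertible(1)[OF assms(1)] by simp
  also have "\<dots> = matrix_inv A"
    by (simp add: matrix_mul_assoc \<open>transpose (matrix_inv A) ** A = mat 1\<close>)
  finally show ?thesis .
qed

lemma coercive_invertible: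
  fixes V :: "real^'p::finite^'p"
  assumes "coercive m V" and "0 < m"
  shows "invertible V"
proof -
  have "x = 0" if "V *v x = 0" for x
  proof -
    have "m * (norm x)^2 \<le> 0"
      using assms(1) that unfolding coercive_def by (metis inner_zero_right)
    then show ?thesis
      using assms(2) by (simp add: mult_le_0_iff)
  qed
  then show ?thesis
    using matrix_left_invertible_ker invertible_left_inverse by blast
qed

lemma coercive_matrix_inv_bounds:
  fixes V :: "real^'p::finite^'p"
  assumes coercive: "coercive m V" and m: "0 < m"
  shows "m * (norm (matrix_inv V *v z))^2 \<le> z \<bullet> (matrix_inv V *v z)"
    and "norm (matrix_inv V *v z) \<le> norm z / m"
    and "z \<bullet> (matrix_inv V *v z) \<le> (norm z)^2 / m"
proof -
  define y where "y = matrix_inv V *v z"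
  have "V *v y = z"
    using matrix_inv_invertible(1)[OF coercive_invertible[OF coercive m]]
    by (simp add: y_def matrix_vector_mul_assoc)
  then have "z \<bullet> y = y \<bullet> (V *v y)"
    by (simp add: inner_commute)
  then show lower: "m * (norm (matrix_inv V *v z))^2 \<le> z \<bullet> (matrix_inv V *v z)"
    using coercive unfolding coercive_def y_def by metis
  have cs: "z \<bullet> y \<le> norm z * norm y"
    by (rule norm_cauchy_schwarz)
  have "m * norm y \<le> norm z"
  proof (cases "y = 0")
    case False
    then have "m * (norm y)^2 \<le> norm z * norm y"
      using lower cs unfolding y_def by linarith
    with False show ?thesis
      by (simp add: power2_eq_square)
  qed simp
  then show norm_bound: "norm (matrix_inv V *v z) \<le> norm z / m"
    using m by (simp add: y_def field_simps)
  have "z \<bullet> y \<le> norm z * (norm z / m)"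
    using cs norm_bound by (metis mult_left_mono norm_ge_zero order_trans y_def)
  then show "z \<bullet> (matrix_inv V *v z) \<le> (norm z)^2 / m"
    by (simp add: y_def power2_eq_square)
qed

lemma pos_def_coercive:
  fixes A :: "real^'p::finite^'p"
  assumes "pos_def A"
  obtains m where "0 < m" and "coercive m A"
proof -
  define g where "g y = y \<bullet> (A *v y)" for y :: "real^'p"
  have cont: "continuous_on (sphere 0 1) g"
    unfolding g_def by (intro continuous_intros linear_continuous_on matrix_vector_mul_bounded_linear)
  have "sphere (0::real^'p) 1 \<noteq> {}"
    using vector_choose_size[of 1] by auto
  then obtain y0 where y0: "y0 \<in> sphere 0 1" and min: "\<And>y. y \<in> sphere 0 1 \<Longrightarrow> g y0 \<le> g y"
    using continuous_attains_inf[OF compact_sphere _ cont] by blast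
  have "y0 \<noteq> 0"
    using y0 by auto
  then have "0 < g y0"
    using assms unfolding pos_def_def g_def by blast
  moreover have "g y0 * (norm y)^2 \<le> g y" for y
  proof (cases "y = 0")
    case False
    define v where "v = (1 / norm y) *\<^sub>R y"
    have "y = norm y *\<^sub>R v"
      using False by (simp add: v_def)
    then have "g y = (norm y)^2 * g v"
      by (metis g_def inner_scaleR_left inner_scaleR_right matrix_vector_mult_scaleR
          mult.assoc power2_eq_square)
    moreover have "g y0 \<le> g v"
      using False by (intro min) (simp add: v_def)
    ultimately show ?thesis
      by (simp add: mult_right_mono mult.commute)
  qed (simp add: g_def)
  ultimately show ?thesis
    using that unfolding coercive_def g_def by blast
qed

lemma coercive_perturb:
  fixes V W Vmin :: "real^'p::finite^'p"
  assumes "coercive m Vmin" and "loewner_le Vmin V" and "0 < m"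
    and close: "matnorm_inf (W - V) \<le> m / (2 * sqrt (real CARD('p)))"
  shows "coercive (m/2) W"
  unfolding coercive_def
proof
  fix y :: "real^'p"
  define D where "D = W - V"
  have "norm (D *v y) \<le> sqrt (real CARD('p)) * supnorm (D *v y)"
    by (rule norm_le_sqrt_card_supnorm)
  also have "\<dots> \<le> sqrt (real CARD('p)) * (matnorm_inf D * supnorm y)"
    by (intro mult_left_mono supnorm_matrix_vector_le) auto
  also have "\<dots> \<le> sqrt (real CARD('p)) * (m / (2 * sqrt (real CARD('p))) * norm y)"
    using close supnorm_le_norm \<open>0 < m\<close>
    by (intro mult_left_mono mult_mono) (auto simp: D_def supnorm_nonneg)
  also have "\<dots> = m / 2 * norm y"
    by simp
  finally have "norm (D *v y) \<le> m / 2 * norm y" .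
  then have "\<bar>y \<bullet> (D *v y)\<bar> \<le> norm y * (m / 2 * norm y)"
    using Cauchy_Schwarz_ineq2[of y "D *v y"] by (meson mult_left_mono norm_ge_zero order_trans)
  moreover have "y \<bullet> (W *v y) = y \<bullet> (V *v y) + y \<bullet> (D *v y)"
    by (simp add: D_def matrix_vector_mult_diff_rdistrib inner_diff_right)
  moreover have "m * (norm y)^2 \<le> y \<bullet> (V *v y)"
    using assms(1,2) unfolding coercive_def loewner_le_def by (meson order_trans)
  ultimately show "m / 2 * (norm y)^2 \<le> y \<bullet> (W *v y)"
    by (simp add: power2_eq_square abs_le_iff mult.left_commute)
qed

section \<open>The Gaussian density\<close>

definition gauss_norm :: "real^'p::finite^'p \<Rightarrow> real" where
  "gauss_norm V = sqrt ((2 * pi) ^ CARD('p) * det V)"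

lemma gauss_pdf_eq: "gauss_pdf V z = exp (- (z \<bullet> (matrix_inv V *v z)) / 2) / gauss_norm V"
  by (simp add: gauss_pdf_def gauss_norm_def)

lemma mult_exp_neg_square_le:
  fixes r m :: real
  assumes "0 \<le> r" "0 < m"
  shows "r * exp (- (m * r^2) / 2) \<le> 1 / sqrt m"
proof -
  define s where "s = sqrt m * r"
  have "s \<le> 1 + s^2/2"
    using sum_power2_ge_zero[of "s - 1" 1] by (simp add: power2_eq_square algebra_simps)
  also have "\<dots> \<le> exp (s^2/2)"
    by (rule exp_ge_add_one_self)
  finally have "s * exp (- (s^2/2)) \<le> 1"
    by (simp add: exp_minus field_simps)
  moreover have "s^2 = m * r^2"
    using assms by (simp add: s_def power_mult_distrib)
  ultimately have "sqrt m * (r * exp (- (m * r^2) / 2)) \<le> 1"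
    by (simp add: s_def mult.assoc)
  then show ?thesis
    using assms by (simp add: field_simps)
qed

lemma gauss_kernel_gradient_le:
  fixes V :: "real^'p::finite^'p"
  assumes "coercive m V" and "0 < m"
  shows "exp (- (w \<bullet> (matrix_inv V *v w)) / 2) * \<bar>d \<bullet> (matrix_inv V *v w)\<bar> \<le> norm d / sqrt m"
proof -
  define y where "y = matrix_inv V *v w"
  have "exp (- (w \<bullet> y) / 2) * \<bar>d \<bullet> y\<bar> \<le> exp (- (m * (norm y)^2) / 2) * (norm d * norm y)"
    using coercive_matrix_inv_bounds(1)[OF assms, of w]
    by (intro mult_mono) (auto simp: y_def Cauchy_Schwarz_ineq2)
  also have "\<dots> = norm d * (norm y * exp (- (m * (norm y)^2) / 2))"
    by simp
  also have "\<dots> \<le> norm d * (1 / sqrt m)"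
    using assms(2) by (intro mult_left_mono mult_exp_neg_square_le) auto
  finally show ?thesis
    by (simp add: y_def)
qed

lemma gauss_pdf_lipschitz:
  fixes V :: "real^'p::finite^'p"
  assumes sym: "transpose V = V" and coercive: "coercive m V" and m: "0 < m"
  shows "\<bar>gauss_pdf V z1 - gauss_pdf V z2\<bar> \<le> \<bar>1 / gauss_norm V\<bar> * norm (z1 - z2) / sqrt m"
proof -
  define A where "A = matrix_inv V"
  define d where "d = z1 - z2"
  have symA: "transpose A = A"
    unfolding A_def by (rule transpose_matrix_inv_symmetric[OF coercive_invertible[OF coercive m] sym])
  define q where "q t = (z2 + t *\<^sub>R d) \<bullet> (A *v (z2 + t *\<^sub>R d))" for t
  have q_eq: "q t = z2 \<bullet> (A *v z2) + t * (2 * (d \<bullet> (A *v z2))) + t^2 * (d \<bullet> (A *v d))" for t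
    using inner_matrix_vector_symmetric[OF symA, of z2 d]
    by (simp add: q_def algebra_simps inner_add_left inner_add_right power2_eq_square)
  define g where "g t = exp (- q t / 2)" for t
  define g' where "g' t = - exp (- q t / 2) * (d \<bullet> (A *v (z2 + t *\<^sub>R d)))" for t
  have deriv: "DERIV g t :> g' t" for t
  proof -
    have "DERIV (\<lambda>t. - (z2 \<bullet> (A *v z2) + t * (2 * (d \<bullet> (A *v z2))) + t^2 * (d \<bullet> (A *v d))) / 2) t
        :> - (2 * (d \<bullet> (A *v z2)) + 2 * t * (d \<bullet> (A *v d))) / 2"
      by (auto intro!: derivative_eq_intros)
    then have "DERIV g t
        :> exp (- q t / 2) * (- (2 * (d \<bullet> (A *v z2)) + 2 * t * (d \<bullet> (A *v d))) / 2)"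
      unfolding g_def q_eq by (rule DERIV_chain2[OF DERIV_exp])
    also have "exp (- q t / 2) * (- (2 * (d \<bullet> (A *v z2)) + 2 * t * (d \<bullet> (A *v d))) / 2) = g' t"
      unfolding g'_def
      by (simp add: inner_add_right field_simps matrix_vector_right_distrib matrix_vector_mult_scaleR)
    finally show ?thesis .
  qed
  have g'_bound: "\<bar>g' t\<bar> \<le> norm d / sqrt m" for t
    using gauss_kernel_gradient_le[OF coercive m, of "z2 + t *\<^sub>R d" d]
    by (simp add: g'_def q_def A_def abs_mult)
  obtain t where "g 1 - g 0 = g' t"
    using MVT2[of 0 1 g g'] deriv by auto
  moreover have "gauss_pdf V z1 - gauss_pdf V z2 = (g 1 - g 0) / gauss_norm V"
    by (simp add: gauss_pdf_eq g_def q_def d_def A_def diff_divide_distrib)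
  ultimately have "\<bar>gauss_pdf V z1 - gauss_pdf V z2\<bar> = \<bar>1 / gauss_norm V\<bar> * \<bar>g' t\<bar>"
    by (simp add: abs_mult)
  also have "\<dots> \<le> \<bar>1 / gauss_norm V\<bar> * (norm d / sqrt m)"
    by (intro mult_left_mono g'_bound) auto
  finally show ?thesis
    by (simp add: d_def)
qed

lemma continuous_on_gauss_pdf: "continuous_on UNIV (gauss_pdf (V::real^'p::finite^'p))"
proof -
  have "continuous_on UNIV (\<lambda>z::real^'p. matrix_inv V *v z)"
    by (intro linear_continuous_on matrix_vector_mul_bounded_linear)
  then show ?thesis
    unfolding gauss_pdf_def[abs_def] divide_inverse by (intro continuous_intros) auto
qed

lemma borel_measurable_gauss_pdf [measurable]:
  "gauss_pdf (V::real^'p::finite^'p) \<in> borel_measurable borel"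
  using continuous_on_gauss_pdf borel_measurable_continuous_onI by blast

definition gauss_measure :: "real^'p::finite^'p \<Rightarrow> (real^'p) measure" where
  "gauss_measure V = density lborel (\<lambda>x. ennreal (gauss_pdf V x))"

lemma sets_gauss_measure [simp]: "sets (gauss_measure V) = sets borel"
  by (simp add: gauss_measure_def)

lemma emeasure_gauss_measure:
  assumes "A \<in> sets borel"
  shows "emeasure (gauss_measure V) A = (\<integral>\<^sup>+x. ennreal (gauss_pdf V x) * indicator A x \<partial>lborel)"
  unfolding gauss_measure_def using assms by (intro emeasure_density) auto

section \<open>Cubes under a measure with nearly Gaussian CDF\<close>

definition cube :: "real^'p::finite \<Rightarrow> real \<Rightarrow> (real^'p) set" where
  "cube c h = cbox (c - (h/2) *\<^sub>R 1) (c + (h/2) *\<^sub>R 1)"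

lemma mem_cube: "x \<in> cube c h \<longleftrightarrow> (\<forall>i. \<bar>x$i - c$i\<bar> \<le> h/2)"
proof -
  have "((c - (h/2) *\<^sub>R 1)$i \<le> x$i \<and> x$i \<le> (c + (h/2) *\<^sub>R 1)$i) \<longleftrightarrow> \<bar>x$i - c$i\<bar> \<le> h/2" for i
    unfolding abs_le_iff by auto
  then show ?thesis
    unfolding cube_def mem_box_cart by blast
qed

lemma partial_box_UNIV_subset_cube:
  assumes "\<And>i. c$i - r \<le> a$i" and "\<And>i. b$i \<le> c$i + r"
  shows "partial_box a b UNIV \<subseteq> cube c (2 * r)"
proof
  fix x assume "x \<in> partial_box a b UNIV"
  then have x: "a$i < x$i \<and> x$i \<le> b$i" for i
    by (simp add: partial_box_UNIV)
  have "\<bar>x$i - c$i\<bar> \<le> 2 * r / 2" for i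
    using assms(1)[of i] assms(2)[of i] x[of i] unfolding abs_le_iff by simp
  then show "x \<in> cube c (2 * r)"
    unfolding mem_cube by blast
qed

lemma cube_subset_partial_box_UNIV:
  assumes "\<And>i. a$i < c$i - h/2" and "\<And>i. c$i + h/2 \<le> b$i"
  shows "cube c h \<subseteq> partial_box a b UNIV"
proof
  fix x assume "x \<in> cube c h"
  then have x: "\<bar>x$i - c$i\<bar> \<le> h/2" for i
    by (simp add: mem_cube)
  have "a$i < x$i \<and> x$i \<le> b$i" for i
    using assms(1)[of i] assms(2)[of i] x[of i] unfolding abs_le_iff by simp
  then show "x \<in> partial_box a b UNIV"
    by (simp add: partial_box_UNIV)
qed

lemma emeasure_lborel_cube:
  fixes c :: "real^'p::finite"
  assumes "0 \<le> h"
  shows "emeasure lborel (cube c h) = ennreal (h ^ CARD('p))"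
  using emeasure_lborel_cbox_cart[of "c - (h/2) *\<^sub>R 1" "c + (h/2) *\<^sub>R 1"] assms
  by (simp add: cube_def less_eq_vec_def)

lemma emeasure_density_le_const:
  fixes f :: "real^'p::finite \<Rightarrow> real"
  assumes [measurable]: "f \<in> borel_measurable borel" "A \<in> sets borel"
    and bound: "\<And>x. x \<in> A \<Longrightarrow> f x \<le> u" and "0 \<le> u"
  shows "emeasure (density lborel (\<lambda>x. ennreal (f x))) A \<le> ennreal u * emeasure lborel A"
proof -
  have "emeasure (density lborel (\<lambda>x. ennreal (f x))) A = (\<integral>\<^sup>+x. ennreal (f x) * indicator A x \<partial>lborel)"
    by (intro emeasure_density) auto
  also have "\<dots> \<le> (\<integral>\<^sup>+x. ennreal u * indicator A x \<partial>lborel)"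
    using bound by (intro nn_integral_mono) (auto simp: indicator_def intro!: ennreal_leI)
  also have "\<dots> = ennreal u * emeasure lborel A"
    by (simp add: nn_integral_cmult_indicator)
  finally show ?thesis .
qed

lemma emeasure_density_ge_const:
  fixes f :: "real^'p::finite \<Rightarrow> real"
  assumes [measurable]: "f \<in> borel_measurable borel" "A \<in> sets borel"
    and bound: "\<And>x. x \<in> A \<Longrightarrow> l \<le> f x"
  shows "ennreal l * emeasure lborel A \<le> emeasure (density lborel (\<lambda>x. ennreal (f x))) A"
proof -
  have "ennreal l * emeasure lborel A = (\<integral>\<^sup>+x. ennreal l * indicator A x \<partial>lborel)"
    by (simp add: nn_integral_cmult_indicator)
  also have "\<dots> \<le> (\<integral>\<^sup>+x. ennreal (f x) * indicator A x \<partial>lborel)"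
    using bound by (intro nn_integral_mono) (auto simp: indicator_def intro!: ennreal_leI)
  also have "\<dots> = emeasure (density lborel (\<lambda>x. ennreal (f x))) A"
    by (intro emeasure_density[symmetric]) auto
  finally show ?thesis .
qed

lemma lower_orthants_cover: "(\<Union>k::nat. {x::real^'p::finite. x \<le> real k *\<^sub>R 1}) = UNIV"
proof safe
  fix x :: "real^'p"
  obtain k :: nat where k: "norm x \<le> real k"
    using real_arch_simple by blast
  have "x \<le> real k *\<^sub>R 1"
    unfolding less_eq_vec_def using k component_le_norm_cart[of x]
    by (auto intro: order_trans abs_ge_self)
  then show "x \<in> (\<Union>k::nat. {x. x \<le> real k *\<^sub>R 1})"
    by auto
qed auto

lemma measure_lower_orthant_gt_half:
  fixes M :: "(real^'p::finite) measure"
  assumes "prob_space M" and sets_M: "sets M = sets borel"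
  obtains z0 where "\<And>z. z0 \<le> z \<Longrightarrow> 1/2 < measure M {x. x \<le> z}"
proof -
  interpret prob_space M by fact
  define U where "U k = {x::real^'p. x \<le> real k *\<^sub>R 1}" for k :: nat
  have "range U \<subseteq> sets M"
    unfolding U_def sets_M using sets_lower_orthant by blast
  moreover have "incseq U"
    by (auto simp: incseq_def U_def less_eq_vec_def) (meson order_trans of_nat_mono)
  ultimately have lim: "(\<lambda>k. measure M (U k)) \<longlonglongrightarrow> measure M (\<Union>(range U))"
    by (rule finite_Lim_measure_incseq)
  have "\<Union>(range U) = UNIV"
    unfolding U_def by (rule lower_orthants_cover)
  then have "measure M (\<Union>(range U)) = 1"
    using sets_M prob_space by (metis sets_eq_imp_space_eq space_borel)
  with lim have "eventually (\<lambda>k. 1/2 < measure M (U k)) sequentially"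
    by (intro order_tendstoD) auto
  then obtain k where k: "1/2 < measure M (U k)"
    by (meson eventually_sequentially order_refl)
  have "1/2 < measure M {x. x \<le> z}" if "real k *\<^sub>R 1 \<le> z" for z
  proof -
    have "U k \<subseteq> {x. x \<le> z}"
      using that by (auto simp: U_def)
    then have "measure M (U k) \<le> measure M {x. x \<le> z}"
      using sets_M sets_lower_orthant by (metis finite_measure_mono)
    with k show ?thesis
      by simp
  qed
  then show ?thesis
    using that by blast
qed

definition gauss_lipschitz_bound :: "nat \<Rightarrow> real \<Rightarrow> real" where
  "gauss_lipschitz_bound p m = 2 * exp (real p / (8 * m)) * sqrt (real p) / sqrt m"

lemma gauss_lipschitz_bound_nonneg: "0 < m \<Longrightarrow> 0 \<le> gauss_lipschitz_bound p m"
  by (simp add: gauss_lipschitz_bound_def)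

locale near_gauss_cdf = prob_space P for P :: "(real^'p::finite) measure" +
  fixes V :: "real^'p^'p" and m e :: real
  assumes sets_P: "sets P = sets borel"
    and symmetric: "transpose V = V"
    and coercive: "coercive m V" and m_pos: "0 < m"
    and cdf_close: "\<And>z. \<bar>measure P {x. x \<le> z} - gauss_cdf V z\<bar> \<le> e"
    and e_le: "e \<le> 1/4"
begin

lemma gauss_cdf_eventually_pos:
  obtains z0 where "\<And>z. z0 \<le> z \<Longrightarrow> 0 < gauss_cdf V z"
proof -
  obtain z0 where "\<And>z. z0 \<le> z \<Longrightarrow> 1/2 < measure P {x. x \<le> z}"
    using measure_lower_orthant_gt_half[OF prob_space_axioms sets_P] by blast
  then have "0 < gauss_cdf V z" if "z0 \<le> z" for z
    using that cdf_close[of z] e_le by fastforce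
  then show ?thesis
    using that by blast
qed

text \<open>Positivity of the normalising constant is not assumed: it follows because a
  non-positive constant would make \<open>gauss_cdf V\<close> non-positive, while it is close to a CDF.\<close>

lemma gauss_norm_pos: "0 < gauss_norm V"
proof (rule ccontr)
  assume "\<not> 0 < gauss_norm V"
  then have "gauss_pdf V x \<le> 0" for x
    by (simp add: gauss_pdf_eq divide_nonneg_nonpos)
  then have "0 \<le> integral\<^sup>L lborel (\<lambda>x. - (indicator {x. x \<le> z} x *\<^sub>R gauss_pdf V x))" for z
    by (intro integral_nonneg_AE AE_I2) (simp add: indicator_def)
  then have "gauss_cdf V z \<le> 0" for z
    by (simp add: gauss_cdf_def set_lebesgue_integral_def)
  then show False
    using gauss_cdf_eventually_pos by (metis not_le order_refl)
qed

lemma gauss_pdf_nonneg: "0 \<le> gauss_pdf V x"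
  using gauss_norm_pos by (simp add: gauss_pdf_eq)

lemma gauss_cdf_nonneg: "0 \<le> gauss_cdf V z"
  unfolding gauss_cdf_def set_lebesgue_integral_def
  using gauss_pdf_nonneg by (intro integral_nonneg_AE AE_I2) (simp add: indicator_def)

lemma emeasure_gauss_lower_orthant:
  "emeasure (gauss_measure V) {x. x \<le> z} = ennreal (gauss_cdf V z)"
proof -
  have cdf_eq: "gauss_cdf V z = enn2real (emeasure (gauss_measure V) {x. x \<le> z})" for z
  proof -
    have "gauss_cdf V z = integral\<^sup>L lborel (\<lambda>x. indicator {x. x \<le> z} x *\<^sub>R gauss_pdf V x)"
      by (simp add: gauss_cdf_def set_lebesgue_integral_def)
    also have "\<dots> = enn2real (\<integral>\<^sup>+x. ennreal (indicator {x. x \<le> z} x *\<^sub>R gauss_pdf V x) \<partial>lborel)"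
      using gauss_pdf_nonneg by (intro integral_eq_nn_integral) (auto simp: indicator_def)
    also have "(\<integral>\<^sup>+x. ennreal (indicator {x. x \<le> z} x *\<^sub>R gauss_pdf V x) \<partial>lborel)
        = emeasure (gauss_measure V) {x. x \<le> z}"
      unfolding emeasure_gauss_measure[OF sets_lower_orthant]
      by (intro nn_integral_cong) (auto simp: indicator_def)
    finally show ?thesis .
  qed
  obtain z0 where z0: "\<And>z. z0 \<le> z \<Longrightarrow> 0 < gauss_cdf V z"
    using gauss_cdf_eventually_pos by blast
  define z' where "z' = (\<chi> i. max (z$i) (z0$i))"
  have "emeasure (gauss_measure V) {x. x \<le> z} \<le> emeasure (gauss_measure V) {x. x \<le> z'}"
    by (intro emeasure_mono) (auto simp: z'_def less_eq_vec_def intro: max.coboundedI1)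
  moreover have "emeasure (gauss_measure V) {x. x \<le> z'} \<noteq> \<infinity>"
    using z0[of z'] cdf_eq[of z'] by (auto simp: z'_def less_eq_vec_def)
  ultimately have "emeasure (gauss_measure V) {x. x \<le> z} \<noteq> \<infinity>"
    by (auto simp: top_unique)
  then show ?thesis
    using cdf_eq[of z] by (simp add: ennreal_enn2real_if)
qed

lemma measure_gauss_lower_orthant: "measure (gauss_measure V) {x. x \<le> z} = gauss_cdf V z"
  by (simp add: measure_def emeasure_gauss_lower_orthant gauss_cdf_nonneg)

lemma gauss_pdf_ge_on_unit_cube:
  assumes "x \<in> cube 0 1"
  shows "exp (- (real CARD('p) / (8 * m))) / gauss_norm V \<le> gauss_pdf V x"
proof -
  have "norm x \<le> sqrt (real CARD('p)) * (1/2)"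
    using assms by (intro norm_le_sqrt_card_mult) (simp add: mem_cube)
  then have "(norm x)^2 \<le> (sqrt (real CARD('p)) * (1/2))^2"
    by (rule power_mono) simp
  also have "\<dots> = real CARD('p) / 4"
    by (simp add: power_mult_distrib power_divide)
  finally have "x \<bullet> (matrix_inv V *v x) \<le> real CARD('p) / 4 / m"
    using coercive_matrix_inv_bounds(3)[OF coercive m_pos, of x] m_pos
    by (meson divide_right_mono less_imp_le order_trans)
  then have "- (real CARD('p) / (8 * m)) \<le> - (x \<bullet> (matrix_inv V *v x)) / 2"
    using m_pos by (simp add: field_simps)
  then show ?thesis
    unfolding gauss_pdf_eq using gauss_norm_pos by (intro divide_right_mono) auto
qed

text \<open>The Gaussian mass of the unit cube around the origin is at most
  \<open>gauss_cdf V (1/2, \<dots>, 1/2) \<le> 1 + e\<close>, which caps the lower bound on the density there.\<close>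

lemma inverse_gauss_norm_le: "1 / gauss_norm V \<le> 2 * exp (real CARD('p) / (8 * m))"
proof -
  define k where "k = exp (- (real CARD('p) / (8 * m))) / gauss_norm V"
  have "ennreal k * emeasure lborel (cube (0::real^'p) 1) \<le> emeasure (gauss_measure V) (cube 0 1)"
    unfolding gauss_measure_def
    by (rule emeasure_density_ge_const) (auto simp: cube_def k_def gauss_pdf_ge_on_unit_cube)
  then have "ennreal k \<le> emeasure (gauss_measure V) (cube 0 1)"
    using emeasure_lborel_cube[of 1 "0::real^'p"] by simp
  also have "\<dots> \<le> emeasure (gauss_measure V) {x. x \<le> (1/2) *\<^sub>R 1}"
    by (intro emeasure_mono) (auto simp: cube_def mem_box_cart less_eq_vec_def)
  also have "\<dots> = ennreal (gauss_cdf V ((1/2) *\<^sub>R 1))"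
    by (rule emeasure_gauss_lower_orthant)
  finally have "k \<le> gauss_cdf V ((1/2) *\<^sub>R 1)"
    using gauss_cdf_nonneg by (simp add: ennreal_le_iff)
  also have "\<dots> \<le> 5/4"
    using cdf_close[of "(1/2) *\<^sub>R 1"] e_le prob_le_1[of "{x. x \<le> (1/2) *\<^sub>R 1}"] by linarith
  finally have "k \<le> 5/4" .
  have "1 / gauss_norm V = k * exp (real CARD('p) / (8 * m))"
    by (simp add: k_def exp_minus field_simps)
  also have "\<dots> \<le> 5/4 * exp (real CARD('p) / (8 * m))"
    using \<open>k \<le> 5/4\<close> by (intro mult_right_mono) auto
  also have "\<dots> \<le> 2 * exp (real CARD('p) / (8 * m))"
    by simp
  finally show ?thesis .
qed

lemma gauss_pdf_lipschitz_cube: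
  assumes "x \<in> cube c (2 * r)"
  shows "\<bar>gauss_pdf V x - gauss_pdf V c\<bar> \<le> gauss_lipschitz_bound CARD('p) m * r"
proof -
  have "\<bar>gauss_pdf V x - gauss_pdf V c\<bar> \<le> \<bar>1 / gauss_norm V\<bar> * norm (x - c) / sqrt m"
    by (rule gauss_pdf_lipschitz[OF symmetric coercive m_pos])
  also have "\<dots> \<le> 2 * exp (real CARD('p) / (8 * m)) * (sqrt (real CARD('p)) * r) / sqrt m"
    using assms inverse_gauss_norm_le gauss_norm_pos m_pos
    by (intro divide_right_mono mult_mono norm_le_sqrt_card_mult) (auto simp: mem_cube)
  finally show ?thesis
    by (simp add: gauss_lipschitz_bound_def)
qed

lemma measure_partial_box_close:
  "\<bar>measure P (partial_box a b UNIV) - measure (gauss_measure V) (partial_box a b UNIV)\<bar>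
     \<le> 2 ^ CARD('p) * e"
  using measure_partial_box_diff_le[OF sets_P sets_gauss_measure, where e = e and I = UNIV]
    emeasure_gauss_lower_orthant cdf_close measure_gauss_lower_orthant
  by simp

lemma emeasure_gauss_partial_box:
  "emeasure (gauss_measure V) (partial_box a b I) = ennreal (measure (gauss_measure V) (partial_box a b I))"
proof -
  have "emeasure (gauss_measure V) (partial_box a b I) \<le> emeasure (gauss_measure V) {x. x \<le> b}"
    by (intro emeasure_mono partial_box_subset_lower_orthant) auto
  then have "emeasure (gauss_measure V) (partial_box a b I) \<noteq> \<infinity>"
    using emeasure_gauss_lower_orthant by (auto simp: top_unique)
  then show ?thesis
    by (simp add: emeasure_eq_ennreal_measure)
qed

lemma measure_gauss_partial_box_le:
  assumes "a \<le> b" and sub: "partial_box a b UNIV \<subseteq> cube c (2 * r)" and "0 \<le> r"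
  shows "measure (gauss_measure V) (partial_box a b UNIV)
    \<le> (gauss_pdf V c + gauss_lipschitz_bound CARD('p) m * r) * (\<Prod>i\<in>UNIV. b$i - a$i)"
proof -
  define u where "u = gauss_pdf V c + gauss_lipschitz_bound CARD('p) m * r"
  have "0 \<le> u"
    using gauss_pdf_nonneg gauss_lipschitz_bound_nonneg[OF m_pos] \<open>0 \<le> r\<close> by (simp add: u_def)
  have "0 \<le> (\<Prod>i\<in>UNIV. b$i - a$i)"
    using \<open>a \<le> b\<close> by (intro prod_nonneg) (simp add: less_eq_vec_def)
  have "gauss_pdf V x \<le> u" if "x \<in> partial_box a b UNIV" for x
    using gauss_pdf_lipschitz_cube[of x c r] sub that by (auto simp: u_def)
  then have "emeasure (gauss_measure V) (partial_box a b UNIV)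
      \<le> ennreal u * emeasure lborel (partial_box a b UNIV)"
    unfolding gauss_measure_def using \<open>0 \<le> u\<close> by (intro emeasure_density_le_const) auto
  also have "\<dots> = ennreal (u * (\<Prod>i\<in>UNIV. b$i - a$i))"
    using \<open>0 \<le> u\<close> \<open>0 \<le> (\<Prod>i\<in>UNIV. b$i - a$i)\<close> \<open>a \<le> b\<close>
    by (simp add: emeasure_lborel_partial_box_UNIV ennreal_mult)
  finally show ?thesis
    using \<open>0 \<le> u\<close> \<open>0 \<le> (\<Prod>i\<in>UNIV. b$i - a$i)\<close>
    by (simp add: emeasure_gauss_partial_box ennreal_le_iff u_def)
qed

lemma measure_gauss_partial_box_ge:
  assumes "a \<le> b" and sub: "partial_box a b UNIV \<subseteq> cube c (2 * r)"
  shows "(gauss_pdf V c - gauss_lipschitz_bound CARD('p) m * r) * (\<Prod>i\<in>UNIV. b$i - a$i)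
    \<le> measure (gauss_measure V) (partial_box a b UNIV)"
proof -
  define l where "l = gauss_pdf V c - gauss_lipschitz_bound CARD('p) m * r"
  have "0 \<le> (\<Prod>i\<in>UNIV. b$i - a$i)"
    using \<open>a \<le> b\<close> by (intro prod_nonneg) (simp add: less_eq_vec_def)
  show ?thesis
  proof (cases "0 \<le> l")
    case True
    have "l \<le> gauss_pdf V x" if "x \<in> partial_box a b UNIV" for x
      using gauss_pdf_lipschitz_cube[of x c r] sub that unfolding l_def abs_le_iff by auto
    then have "ennreal l * emeasure lborel (partial_box a b UNIV)
        \<le> emeasure (gauss_measure V) (partial_box a b UNIV)"
      unfolding gauss_measure_def by (intro emeasure_density_ge_const) auto
    then show ?thesis
      using True \<open>0 \<le> (\<Prod>i\<in>UNIV. b$i - a$i)\<close> \<open>a \<le> b\<close>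
      by (simp add: emeasure_lborel_partial_box_UNIV emeasure_gauss_partial_box l_def
          ennreal_mult[symmetric])
  next
    case False
    then have "l * (\<Prod>i\<in>UNIV. b$i - a$i) \<le> 0"
      using \<open>0 \<le> (\<Prod>i\<in>UNIV. b$i - a$i)\<close> by (simp add: mult_nonpos_nonneg)
    then show ?thesis
      using measure_nonneg order_trans unfolding l_def by blast
  qed
qed

lemma measure_cube_lower:
  assumes "0 < h"
  shows "(gauss_pdf V c - gauss_lipschitz_bound CARD('p) m * (h/2)) * h ^ CARD('p) - 2 ^ CARD('p) * e
    \<le> measure P (cube c h)"
proof -
  define a b where "a = c - (h/2) *\<^sub>R 1" and "b = c + (h/2) *\<^sub>R 1"
  have "a \<le> b"
    using assms by (simp add: a_def b_def less_eq_vec_def)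
  have sub: "partial_box a b UNIV \<subseteq> cube c (2 * (h/2))"
    by (rule partial_box_UNIV_subset_cube) (simp_all add: a_def b_def)
  have "(gauss_pdf V c - gauss_lipschitz_bound CARD('p) m * (h/2)) * h ^ CARD('p)
      \<le> measure (gauss_measure V) (partial_box a b UNIV)"
    using measure_gauss_partial_box_ge[OF \<open>a \<le> b\<close> sub] by (simp add: a_def b_def)
  also have "\<dots> \<le> measure P (partial_box a b UNIV) + 2 ^ CARD('p) * e"
    using measure_partial_box_close[of a b] by linarith
  also have "measure P (partial_box a b UNIV) \<le> measure P (cube c h)"
    using sub sets_P by (intro finite_measure_mono) (auto simp: cube_def)
  finally show ?thesis
    by simp
qed

text \<open>A closed cube is not a partial box, so it is enclosed in partial boxes with lower
  corner pushed out by \<open>\<eta>\<close>, and \<open>\<eta> \<rightarrow> 0\<close>.\<close>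

lemma measure_cube_upper:
  assumes "0 < h"
  shows "measure P (cube c h)
    \<le> (gauss_pdf V c + gauss_lipschitz_bound CARD('p) m * (h/2)) * h ^ CARD('p) + 2 ^ CARD('p) * e"
proof -
  define u where "u \<eta> = (gauss_pdf V c + gauss_lipschitz_bound CARD('p) m * (h/2 + \<eta>)) * (h + \<eta>) ^ CARD('p)
    + 2 ^ CARD('p) * e" for \<eta>
  have "measure P (cube c h) \<le> u \<eta>" if "0 < \<eta>" for \<eta>
  proof -
    define a b where "a = c - (h/2 + \<eta>) *\<^sub>R 1" and "b = c + (h/2) *\<^sub>R 1"
    have "a \<le> b"
      using assms that by (simp add: a_def b_def less_eq_vec_def)
    have inner: "cube c h \<subseteq> partial_box a b UNIV"
      using that by (intro cube_subset_partial_box_UNIV) (simp_all add: a_def b_def)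
    have outer: "partial_box a b UNIV \<subseteq> cube c (2 * (h/2 + \<eta>))"
      using that by (intro partial_box_UNIV_subset_cube) (simp_all add: a_def b_def)
    have "measure P (cube c h) \<le> measure P (partial_box a b UNIV)"
      using inner sets_P by (intro finite_measure_mono) auto
    also have "\<dots> \<le> measure (gauss_measure V) (partial_box a b UNIV) + 2 ^ CARD('p) * e"
      using measure_partial_box_close[of a b] by linarith
    also have "measure (gauss_measure V) (partial_box a b UNIV)
        \<le> (gauss_pdf V c + gauss_lipschitz_bound CARD('p) m * (h/2 + \<eta>)) * (h + \<eta>) ^ CARD('p)"
      using measure_gauss_partial_box_le[OF \<open>a \<le> b\<close> outer] assms that by (simp add: a_def b_def)
    finally show ?thesis
      by (simp add: u_def)
  qed
  moreover have "(u \<longlongrightarrow> u 0) (at_right 0)"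
    unfolding u_def by (intro tendsto_intros)
  ultimately have "measure P (cube c h) \<le> u 0"
    by (intro tendsto_lowerbound[where F = "at_right 0"])
      (auto simp: trivial_limit_at_right_real intro: eventually_at_rightI[of 0 1])
  then show ?thesis
    by (simp add: u_def)
qed

lemma measure_cube_approx:
  assumes "0 < h"
  shows "\<bar>measure P (cube c h) / h ^ CARD('p) - gauss_pdf V c\<bar>
    \<le> gauss_lipschitz_bound CARD('p) m * (h/2) + 2 ^ CARD('p) * e / h ^ CARD('p)"
proof -
  define L where "L = gauss_lipschitz_bound CARD('p) m"
  have hp: "0 < h ^ CARD('p)"
    using assms by simp
  have "gauss_pdf V c - L * (h/2) - 2 ^ CARD('p) * e / h ^ CARD('p)
      = ((gauss_pdf V c - L * (h/2)) * h ^ CARD('p) - 2 ^ CARD('p) * e) / h ^ CARD('p)"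
    using assms by (simp add: diff_divide_distrib)
  also have "\<dots> \<le> measure P (cube c h) / h ^ CARD('p)"
    using measure_cube_lower[OF assms, of c] hp by (intro divide_right_mono) (auto simp: L_def)
  finally have lower: "gauss_pdf V c - L * (h/2) - 2 ^ CARD('p) * e / h ^ CARD('p)
      \<le> measure P (cube c h) / h ^ CARD('p)" .
  have "measure P (cube c h) / h ^ CARD('p)
      \<le> ((gauss_pdf V c + L * (h/2)) * h ^ CARD('p) + 2 ^ CARD('p) * e) / h ^ CARD('p)"
    using measure_cube_upper[OF assms, of c] hp by (intro divide_right_mono) (auto simp: L_def)
  also have "\<dots> = gauss_pdf V c + L * (h/2) + 2 ^ CARD('p) * e / h ^ CARD('p)"
    using assms by (simp add: add_divide_distrib)
  finally have upper: "measure P (cube c h) / h ^ CARD('p)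
      \<le> gauss_pdf V c + L * (h/2) + 2 ^ CARD('p) * e / h ^ CARD('p)" .
  show ?thesis
    using lower upper unfolding L_def abs_le_iff by linarith
qed

end

section \<open>Rate of the local density approximation\<close>

lemma measure_supball_density_approx:
  fixes Q :: "(real^'p::finite) measure" and V :: "real^'p^'p"
  assumes "prob_space Q" and sets_Q: "sets Q = sets borel"
    and "transpose V = V" "coercive m V" "0 < m"
    and cdf: "\<And>z. \<bar>measure Q {x. t *\<^sub>R (x - r) \<le> z} - gauss_cdf V z\<bar> \<le> e"
    and "e \<le> 1/4" and t: "0 < t" and "0 < \<rho>"
  shows "\<bar>measure Q (supball s \<rho>) / (2 * \<rho> * t) ^ CARD('p) - gauss_pdf V (t *\<^sub>R (s - r))\<bar>
    \<le> gauss_lipschitz_bound CARD('p) m * (\<rho> * t) + 2 ^ CARD('p) * e / (2 * \<rho> * t) ^ CARD('p)"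
proof -
  define f where "f x = t *\<^sub>R (x - r)" for x :: "real^'p"
  have f_meas: "f \<in> Q \<rightarrow>\<^sub>M borel"
    unfolding measurable_cong_sets[OF sets_Q refl] f_def
    by (intro borel_measurable_continuous_onI continuous_intros)
  define P where "P = distr Q borel f"
  have measure_P: "measure P A = measure Q (f -` A)" if "A \<in> sets borel" for A
    using measure_distr[OF f_meas that] sets_eq_imp_space_eq[OF sets_Q] by (simp add: P_def)
  have "prob_space P"
    unfolding P_def by (rule prob_space.prob_space_distr[OF \<open>prob_space Q\<close> f_meas])
  moreover have "\<bar>measure P {x. x \<le> z} - gauss_cdf V z\<bar> \<le> e" for z
    using cdf[of z] measure_P[OF sets_lower_orthant] by (simp add: vimage_def f_def)
  ultimately interpret near_gauss_cdf P V m e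
    using assms by (simp add: near_gauss_cdf_def near_gauss_cdf_axioms_def P_def)
  have "x \<in> f -` cube (t *\<^sub>R (s - r)) (2 * \<rho> * t) \<longleftrightarrow> x \<in> supball s \<rho>" for x
  proof -
    have "\<bar>t * (x$i - r$i) - t * (s$i - r$i)\<bar> \<le> 2 * \<rho> * t / 2 \<longleftrightarrow> \<bar>x$i - s$i\<bar> \<le> \<rho>" for i
      using t by (simp add: right_diff_distrib[symmetric] abs_mult)
    then show ?thesis
      by (simp add: f_def mem_cube supball_def supnorm_le_iff)
  qed
  then have "f -` cube (t *\<^sub>R (s - r)) (2 * \<rho> * t) = supball s \<rho>"
    by blast
  then have "measure P (cube (t *\<^sub>R (s - r)) (2 * \<rho> * t)) = measure Q (supball s \<rho>)"
    using measure_P[of "cube (t *\<^sub>R (s - r)) (2 * \<rho> * t)"] by (simp add: cube_def)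
  moreover have "0 < 2 * \<rho> * t"
    using assms by simp
  ultimately show ?thesis
    using measure_cube_approx[of "2 * \<rho> * t" "t *\<^sub>R (s - r)"] by simp
qed

text \<open>For the cube side \<open>h = 2 x\<^sup>-\<^sup>\<alpha> \<surd>x\<close>, the Lipschitz error \<open>O(h)\<close> and the CDF error
  \<open>O(x\<^sup>-\<^sup>1\<^sup>/\<^sup>2 / h\<^sup>p)\<close> are the two branches of \<open>gamma_rate\<close>.\<close>

lemma density_approx_rate:
  fixes x \<alpha> L C :: real
  assumes x: "1 \<le> x" and L: "0 \<le> L" and C: "0 \<le> C"
  shows "L * (x powr (-\<alpha>) * sqrt x) + 2 ^ p * (C / sqrt x) / (2 * x powr (-\<alpha>) * sqrt x) ^ p
    \<le> (L + C) * x powr gamma_rate p \<alpha>"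
proof -
  have sqrt_x: "sqrt x = x powr (1/2)"
    using x by (simp add: powr_half_sqrt)
  have h: "x powr (-\<alpha>) * sqrt x = x powr (1/2 - \<alpha>)"
    unfolding sqrt_x by (simp add: powr_add[symmetric])
  have "(x powr (1/2 - \<alpha>)) ^ p = (x powr (1/2 - \<alpha>)) powr real p"
    using x by (intro powr_realpow[symmetric]) simp
  also have "\<dots> = x powr (real p * (1/2 - \<alpha>))"
    unfolding powr_powr by (simp only: mult.commute)
  finally have h_pow: "(x powr (1/2 - \<alpha>)) ^ p = x powr (real p * (1/2 - \<alpha>))" .
  have "(2 * x powr (-\<alpha>) * sqrt x) ^ p = 2 ^ p * x powr (real p * (1/2 - \<alpha>))"
    by (simp only: mult.assoc h power_mult_distrib h_pow)
  then have "2 ^ p * (C / sqrt x) / (2 * x powr (-\<alpha>) * sqrt x) ^ p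
      = 2 ^ p * (C / x powr (1/2)) / (2 ^ p * x powr (real p * (1/2 - \<alpha>)))"
    by (simp only: sqrt_x)
  also have "\<dots> = C / (x powr (1/2) * x powr (real p * (1/2 - \<alpha>)))"
    by simp
  also have "\<dots> = C * x powr (- (1/2 + real p * (1/2 - \<alpha>)))"
    by (simp only: powr_add[symmetric] powr_minus divide_inverse)
  also have "- (1/2 + real p * (1/2 - \<alpha>)) = real p * (\<alpha> - 1/2) - 1/2"
    by (simp add: algebra_simps)
  finally have second: "2 ^ p * (C / sqrt x) / (2 * x powr (-\<alpha>) * sqrt x) ^ p
      = C * x powr (real p * (\<alpha> - 1/2) - 1/2)" .
  have "L * x powr (1/2 - \<alpha>) \<le> L * x powr gamma_rate p \<alpha>"
    using x L by (intro mult_left_mono powr_mono) (auto simp: gamma_rate_def)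
  moreover have "C * x powr (real p * (\<alpha> - 1/2) - 1/2) \<le> C * x powr gamma_rate p \<alpha>"
    using x C by (intro mult_left_mono powr_mono) (auto simp: gamma_rate_def)
  ultimately show ?thesis
    unfolding h second distrib_right by linarith
qed

lemma measure_supball_density_rate:
  fixes Q :: "(real^'p::finite) measure" and V :: "real^'p^'p" and n :: nat
  assumes "prob_space Q" "sets Q = sets borel" "transpose V = V" "coercive m V" "0 < m"
    and cdf: "\<And>z. \<bar>measure Q {x. sqrt (real n) *\<^sub>R (x - r) \<le> z} - gauss_cdf V z\<bar> \<le> C / sqrt (real n)"
    and "0 \<le> C" and n: "16 * C^2 + 1 \<le> real n"
  shows "\<bar>measure Q (supball s (real n powr (-\<alpha>))) / (2 * real n powr (-\<alpha>) * sqrt (real n)) ^ CARD('p)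
      - gauss_pdf V (sqrt (real n) *\<^sub>R (s - r))\<bar>
    \<le> (gauss_lipschitz_bound CARD('p) m + C) * real n powr gamma_rate CARD('p) \<alpha>"
proof -
  have "1 \<le> real n"
    using n zero_le_power2[of C] by linarith
  have "4 * C \<le> sqrt (real n)"
    using real_sqrt_le_mono[of "16 * C^2" "real n"] n \<open>0 \<le> C\<close> by (simp add: real_sqrt_mult)
  then have "C / sqrt (real n) \<le> 1/4"
    using \<open>1 \<le> real n\<close> by (simp add: field_simps)
  define L where "L = gauss_lipschitz_bound CARD('p) m"
  have "\<bar>measure Q (supball s (real n powr (-\<alpha>))) / (2 * real n powr (-\<alpha>) * sqrt (real n)) ^ CARD('p)
      - gauss_pdf V (sqrt (real n) *\<^sub>R (s - r))\<bar>
    \<le> L * (real n powr (-\<alpha>) * sqrt (real n))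
      + 2 ^ CARD('p) * (C / sqrt (real n)) / (2 * real n powr (-\<alpha>) * sqrt (real n)) ^ CARD('p)"
    unfolding L_def using \<open>0 \<le> C\<close> \<open>1 \<le> real n\<close> \<open>C / sqrt (real n) \<le> 1/4\<close>
    by (intro measure_supball_density_approx[OF assms(1-5) cdf]) auto
  also have "\<dots> \<le> (L + C) * real n powr gamma_rate CARD('p) \<alpha>"
    unfolding L_def using \<open>0 < m\<close> \<open>0 \<le> C\<close> \<open>1 \<le> real n\<close>
    by (intro density_approx_rate gauss_lipschitz_bound_nonneg)
  finally show ?thesis
    unfolding L_def .
qed

lemma gamma_rate_optimal:
  fixes p :: nat
  assumes "1 \<le> p"
  shows "let \<alpha>' = (2 + real p) / (2 * (real p + 1)) in
    1/2 < \<alpha>' \<and> \<alpha>' < (real p + 1) / (2 * real p) \<and>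
    gamma_rate p \<alpha>' = - 1 / (2 * (real p + 1)) \<and>
    (\<forall>a. 1/2 < a \<and> a < (real p + 1) / (2 * real p) \<longrightarrow> gamma_rate p \<alpha>' \<le> gamma_rate p a)"
proof -
  define q where "q = real p"
  have q: "1 \<le> q"
    using assms by (simp add: q_def)
  define \<alpha>' where "\<alpha>' = (2 + q) / (2 * (q + 1))"
  have "1/2 < \<alpha>'" and "\<alpha>' < (q + 1) / (2 * q)"
    using q by (simp_all add: \<alpha>'_def field_simps)
  moreover have "q * (\<alpha>' - 1/2) - 1/2 = - 1 / (2 * (q + 1))" and "1/2 - \<alpha>' = - 1 / (2 * (q + 1))"
    using q by (simp_all add: \<alpha>'_def field_simps)
  then have \<gamma>: "gamma_rate p \<alpha>' = - 1 / (2 * (q + 1))"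
    by (simp add: gamma_rate_def q_def)
  moreover have "gamma_rate p \<alpha>' \<le> gamma_rate p a" for a
  proof -
    define U W where "U = q * (a - 1/2) - 1/2" and "W = 1/2 - a"
    txt \<open>The two branches of the maximum add up, with weights 1 and \<open>p\<close>, to the constant \<open>-1/2\<close>.\<close>
    have "- 1/2 = U + q * W"
      by (simp add: U_def W_def algebra_simps)
    also have "\<dots> \<le> max U W + q * max U W"
      using q by (intro add_mono mult_left_mono) auto
    finally have "- 1 / (2 * (q + 1)) \<le> max U W"
      using q by (simp add: field_simps)
    then show ?thesis
      using \<gamma> by (simp add: gamma_rate_def q_def U_def W_def)
  qed
  ultimately show ?thesis
    unfolding Let_def q_def[symmetric] \<alpha>'_def[symmetric] by blast
qed

section \<open>Events of high probability\<close>

lemma wp_at_least_mono: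
  assumes "wp_at_least M P d" and "\<And>w. w \<in> space M \<Longrightarrow> P w \<Longrightarrow> R w"
  shows "wp_at_least M R d"
  using assms sets.sets_into_space unfolding wp_at_least_def by blast

lemma wp_at_least_conj:
  assumes "prob_space M" and "wp_at_least M P d1" and "wp_at_least M R d2"
  shows "wp_at_least M (\<lambda>w. P w \<and> R w) (d1 + d2)"
proof -
  interpret prob_space M by fact
  obtain A B where A: "A \<in> sets M" "1 - d1 \<le> prob A" "\<forall>w\<in>A. P w"
    and B: "B \<in> sets M" "1 - d2 \<le> prob B" "\<forall>w\<in>B. R w"
    using assms(2,3) unfolding wp_at_least_def by blast
  have "prob (A \<union> B) = prob A + prob B - prob (A \<inter> B)"
    using A B by (intro measure_Un3) (auto simp: fmeasurable_def less_top[symmetric])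
  moreover have "prob (A \<union> B) \<le> 1"
    by simp
  ultimately have "1 - (d1 + d2) \<le> prob (A \<inter> B)"
    using A B by linarith
  then show ?thesis
    unfolding wp_at_least_def using A B by blast
qed

lemma event_to_one_mono:
  assumes "event_to_one M E" and "\<And>n w. w \<in> space M \<Longrightarrow> E n w \<Longrightarrow> F n w"
  shows "event_to_one M F"
  using assms unfolding event_to_one_def by (blast intro: eventually_mono wp_at_least_mono)

lemma event_to_one_coercive:
  fixes V :: "'t \<Rightarrow> real^'p::finite^'p"
  assumes "pos_def Vmin" and "\<And>\<theta>. \<theta> \<in> T \<Longrightarrow> loewner_le Vmin (V \<theta>)"
    and close: "\<And>e. 0 < e \<Longrightarrow> event_to_one M (\<lambda>n w. \<forall>\<theta>\<in>T. matnorm_inf (W n w \<theta> - V \<theta>) \<le> e)"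
  obtains m where "0 < m" and "event_to_one M (\<lambda>n w. \<forall>\<theta>\<in>T. coercive m (W n w \<theta>))"
proof -
  obtain m where m: "0 < m" "coercive m Vmin"
    using pos_def_coercive[OF assms(1)] by blast
  have "event_to_one M (\<lambda>n w. \<forall>\<theta>\<in>T. matnorm_inf (W n w \<theta> - V \<theta>) \<le> m / (2 * sqrt (real CARD('p))))"
    using m by (intro close) simp
  then have "event_to_one M (\<lambda>n w. \<forall>\<theta>\<in>T. coercive (m/2) (W n w \<theta>))"
    by (rule event_to_one_mono) (use m assms(2) coercive_perturb in blast)
  then show ?thesis
    using that[of "m/2"] m by simp
qed

lemma wp_at_least_eventually_combine:
  fixes N N1 N2 :: nat
  assumes "prob_space M"
    and P: "\<And>n. N1 \<le> n \<Longrightarrow> wp_at_least M (P n) (d/2)"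
    and R: "\<And>n. N2 \<le> n \<Longrightarrow> wp_at_least M (R n) (d/2)"
    and S: "\<And>n w. N \<le> n \<Longrightarrow> w \<in> space M \<Longrightarrow> P n w \<Longrightarrow> R n w \<Longrightarrow> S n w"
  shows "\<forall>n\<ge>max N (max N1 N2). wp_at_least M (S n) d"
proof (intro allI impI)
  fix n assume "max N (max N1 N2) \<le> n"
  then have n: "N \<le> n" "N1 \<le> n" "N2 \<le> n"
    by auto
  then have "wp_at_least M (\<lambda>w. P n w \<and> R n w) (d/2 + d/2)"
    by (intro wp_at_least_conj[OF assms(1)] P R)
  then show "wp_at_least M (S n) d"
    using S[OF n(1)] by (auto intro: wp_at_least_mono)
qed

lemma measure_supball_density_approx_whp:
  fixes M :: "'w measure" and Q :: "nat \<Rightarrow> 'w \<Rightarrow> 't \<Rightarrow> (real^'p::finite) measure"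
  assumes M: "prob_space M"
    and Q_prob: "\<And>n w \<theta>. w \<in> space M \<Longrightarrow> \<theta> \<in> T \<Longrightarrow> prob_space (Q n w \<theta>)"
    and Q_sets: "\<And>n w \<theta>. w \<in> space M \<Longrightarrow> \<theta> \<in> T \<Longrightarrow> sets (Q n w \<theta>) = sets borel"
    and "0 < m" and coercive: "event_to_one M (\<lambda>n w. \<forall>\<theta>\<in>T. coercive m (rcov_scaled n (Q n w \<theta>)))"
    and cdf: "\<And>d. 0 < d \<Longrightarrow> d < 1 \<Longrightarrow> \<exists>C::real. \<exists>N::nat. \<forall>n\<ge>N. wp_at_least M
      (\<lambda>w. \<forall>\<theta>\<in>T. \<forall>z. \<bar>measure (Q n w \<theta>) {x. sqrt (real n) *\<^sub>R (x - rmean (Q n w \<theta>)) \<le> z}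
        - gauss_cdf (rcov_scaled n (Q n w \<theta>)) z\<bar> \<le> C / sqrt (real n)) d"
    and "0 < \<delta>" "\<delta> < 1"
  shows "\<exists>C::real. \<exists>N::nat. \<forall>n\<ge>N. wp_at_least M (\<lambda>w. \<forall>\<theta>\<in>T.
      \<bar>measure (Q n w \<theta>) (supball (s n w) (real n powr (-\<alpha>)))
          / (2 * real n powr (-\<alpha>) * sqrt (real n)) ^ CARD('p)
        - gauss_pdf (rcov_scaled n (Q n w \<theta>)) (sqrt (real n) *\<^sub>R (s n w - rmean (Q n w \<theta>)))\<bar>
      \<le> C * real n powr (gamma_rate CARD('p) \<alpha>)) \<delta>"
proof -
  have \<delta>2: "0 < \<delta>/2" "\<delta>/2 < 1"
    using \<open>0 < \<delta>\<close> \<open>\<delta> < 1\<close> by auto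
  obtain N1 where N1: "\<And>n. N1 \<le> n \<Longrightarrow>
      wp_at_least M (\<lambda>w. \<forall>\<theta>\<in>T. coercive m (rcov_scaled n (Q n w \<theta>))) (\<delta>/2)"
    using coercive \<delta>2 unfolding event_to_one_def eventually_sequentially by blast
  obtain C0 N2 where N2: "\<And>n. N2 \<le> n \<Longrightarrow> wp_at_least M (\<lambda>w. \<forall>\<theta>\<in>T. \<forall>z.
      \<bar>measure (Q n w \<theta>) {x. sqrt (real n) *\<^sub>R (x - rmean (Q n w \<theta>)) \<le> z}
        - gauss_cdf (rcov_scaled n (Q n w \<theta>)) z\<bar> \<le> C0 / sqrt (real n)) (\<delta>/2)"
    using cdf[OF \<delta>2] by blast
  define C where "C = max C0 0"
  obtain N :: nat where N: "16 * C^2 + 1 \<le> real N"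
    using real_arch_simple by blast
  have "\<forall>n\<ge>max N (max N1 N2). wp_at_least M (\<lambda>w. \<forall>\<theta>\<in>T.
      \<bar>measure (Q n w \<theta>) (supball (s n w) (real n powr (-\<alpha>)))
          / (2 * real n powr (-\<alpha>) * sqrt (real n)) ^ CARD('p)
        - gauss_pdf (rcov_scaled n (Q n w \<theta>)) (sqrt (real n) *\<^sub>R (s n w - rmean (Q n w \<theta>)))\<bar>
      \<le> (gauss_lipschitz_bound CARD('p) m + C) * real n powr (gamma_rate CARD('p) \<alpha>)) \<delta>"
  proof (rule wp_at_least_eventually_combine[OF M N1 N2])
    fix n w assume "N \<le> n" "w \<in> space M"
      and coercive_n: "\<forall>\<theta>\<in>T. coercive m (rcov_scaled n (Q n w \<theta>))"
      and cdf_n: "\<forall>\<theta>\<in>T. \<forall>z. \<bar>measure (Q n w \<theta>) {x. sqrt (real n) *\<^sub>R (x - rmean (Q n w \<theta>)) \<le> z}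
        - gauss_cdf (rcov_scaled n (Q n w \<theta>)) z\<bar> \<le> C0 / sqrt (real n)"
    have "C0 / sqrt (real n) \<le> C / sqrt (real n)"
      by (simp add: C_def divide_right_mono)
    then have "\<bar>measure (Q n w \<theta>) {x. sqrt (real n) *\<^sub>R (x - rmean (Q n w \<theta>)) \<le> z}
        - gauss_cdf (rcov_scaled n (Q n w \<theta>)) z\<bar> \<le> C / sqrt (real n)" if "\<theta> \<in> T" for \<theta> z
      using cdf_n that by (meson order_trans)
    then show "\<forall>\<theta>\<in>T. \<bar>measure (Q n w \<theta>) (supball (s n w) (real n powr (-\<alpha>)))
          / (2 * real n powr (-\<alpha>) * sqrt (real n)) ^ CARD('p)
        - gauss_pdf (rcov_scaled n (Q n w \<theta>)) (sqrt (real n) *\<^sub>R (s n w - rmean (Q n w \<theta>)))\<bar>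
      \<le> (gauss_lipschitz_bound CARD('p) m + C) * real n powr (gamma_rate CARD('p) \<alpha>)"
      using Q_prob Q_sets N coercive_n \<open>N \<le> n\<close> \<open>w \<in> space M\<close> \<open>0 < m\<close>
      by (intro ballI measure_supball_density_rate) (auto simp: transpose_rcov_scaled C_def)
  qed
  then show ?thesis
    by blast
qed

theorem lemma1:
  fixes M :: "'w measure"
    and Q :: "nat \<Rightarrow> 'w \<Rightarrow> real^'p::finite \<Rightarrow> (real^'p) measure"
    and s :: "nat \<Rightarrow> 'w \<Rightarrow> real^'p"
    and T :: "(real^'p) set"
    and prior :: "nat \<Rightarrow> 'w \<Rightarrow> real^'p \<Rightarrow> real"
    and r :: "real^'p \<Rightarrow> real^'p"
    and V :: "real^'p \<Rightarrow> real^'p^'p"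
    and \<theta>s :: "real^'p"
    and \<delta> \<alpha> :: real
  defines "rn \<equiv> \<lambda>n w \<theta>. rmean (Q n w \<theta>)"
      and "Vn \<equiv> \<lambda>n w \<theta>. rcov_scaled n (Q n w \<theta>)"
      and "p \<equiv> CARD('p)"
  assumes M: "prob_space M"
    and s_meas: "\<And>n. s n \<in> borel_measurable M"
    and Q_prob: "\<And>n w \<theta>. w \<in> space M \<Longrightarrow> \<theta> \<in> T \<Longrightarrow> prob_space (Q n w \<theta>)"
    and Q_sets: "\<And>n w \<theta>. w \<in> space M \<Longrightarrow> \<theta> \<in> T \<Longrightarrow> sets (Q n w \<theta>) = sets borel"
    (* (A4) *)
    and A4: "\<And>n w \<theta> i j. w \<in> space M \<Longrightarrow> \<theta> \<in> T \<Longrightarrow>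
               integrable (Q n w \<theta>) (\<lambda>x. x $ i) \<and> integrable (Q n w \<theta>) (\<lambda>x. x $ i * x $ j)"
    (* (A5) *)
    and A5_compact: "compact T"
    and A5_prior: "\<And>n w \<theta>. w \<in> space M \<Longrightarrow> prior n w \<theta> \<ge> 0"
    and A5_prior_out: "\<And>n w \<theta>. w \<in> space M \<Longrightarrow> \<theta> \<notin> T \<Longrightarrow> prior n w \<theta> = 0"
    and A5_prior_int: "\<And>n w. w \<in> space M \<Longrightarrow> set_integrable lborel T (prior n w)
                          \<and> (LINT \<theta>:T|lborel. prior n w \<theta>) = 1"
    and A5_supp: "\<And>n w. w \<in> space M \<Longrightarrow> closure {\<theta>. prior n w \<theta> > 0} = T"
    (* (A6) *)
    and A6a: "\<And>e. e > 0 \<Longrightarrow> event_to_one M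
                (\<lambda>n w. \<forall>\<theta>\<in>T. sqrt (real n) * supnorm (rn n w \<theta> - r \<theta>) \<le> e)"
    and A6b_mem: "\<theta>s \<in> T"
    and A6b: "conv_prob_vec M s (r \<theta>s)"
    and A6b_uniq: "\<And>\<theta>. \<theta> \<in> T \<Longrightarrow> conv_prob_vec M s (r \<theta>) \<Longrightarrow> \<theta> = \<theta>s"
    and A6cd: "\<exists>U J. open U \<and> \<theta>s \<in> U \<and>
                 (\<forall>x\<in>U. (r has_derivative (\<lambda>h. J x *v h)) (at x)) \<and>
                 (\<forall>x\<in>U. J differentiable (at x)) \<and>
                 invertible (J \<theta>s) \<and>
                 pos_def (matrix_inv (J \<theta>s) ** V \<theta>s ** transpose (matrix_inv (J \<theta>s)))"
    (* (A7) *)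
    and A7a: "\<And>e. e > 0 \<Longrightarrow> event_to_one M
                (\<lambda>n w. \<forall>\<theta>\<in>T. matnorm_inf (Vn n w \<theta> - V \<theta>) \<le> e)"
    and A7b: "\<exists>Vmin Vmax. pos_def Vmin \<and> pos_def Vmax \<and>
                 (\<forall>\<theta>\<in>T. loewner_le Vmin (V \<theta>) \<and> loewner_le (V \<theta>) Vmax)"
    and A7c: "\<exists>U. open U \<and> \<theta>s \<in> U \<and> continuous_on U V"
    (* (A8) *)
    and A8a: "\<exists>C>0. event_to_one M (\<lambda>n w. \<forall>\<theta>\<in>T. prior n w \<theta> \<le> C)"
    and A8b: "\<exists>C>0. conv_prob_real M (\<lambda>n w. prior n w \<theta>s) C"
    and A8c: "\<And>e. e > 0 \<Longrightarrow> \<exists>d>0. event_to_one M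
                (\<lambda>n w. \<forall>\<theta>. supnorm (\<theta> - \<theta>s) < d \<longrightarrow> \<bar>prior n w \<theta> - prior n w \<theta>s\<bar> < e)"
    (* (A9) *)
    and A9: "\<And>d. 0 < d \<Longrightarrow> d < 1 \<Longrightarrow> \<exists>C::real. \<exists>N::nat. \<forall>n\<ge>N. wp_at_least M
                (\<lambda>w. \<forall>\<theta>\<in>T. \<forall>z.
                   \<bar>measure (Q n w \<theta>) {x. sqrt (real n) *\<^sub>R (x - rn n w \<theta>) \<le> z}
                    - gauss_cdf (Vn n w \<theta>) z\<bar> \<le> C / sqrt (real n)) d"
    and \<delta>: "0 < \<delta>" "\<delta> < 1"
    and \<alpha>: "1/2 < \<alpha>" "\<alpha> < (real p + 1) / (2 * real p)"
  shows "(\<exists>C::real. \<exists>N::nat. \<forall>n\<ge>N. wp_at_least M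
            (\<lambda>w. \<forall>\<theta>\<in>T.
               \<bar>measure (Q n w \<theta>) (supball (s n w) (real n powr (-\<alpha>)))
                   / (2 * real n powr (-\<alpha>) * sqrt (real n)) ^ p
                 - gauss_pdf (Vn n w \<theta>) (sqrt (real n) *\<^sub>R (s n w - rn n w \<theta>))\<bar>
               \<le> C * real n powr (gamma_rate p \<alpha>)) \<delta>)
         \<and> (let \<alpha>' = (2 + real p) / (2 * (real p + 1)) in
              1/2 < \<alpha>' \<and> \<alpha>' < (real p + 1) / (2 * real p) \<and>
              gamma_rate p \<alpha>' = - 1 / (2 * (real p + 1)) \<and>
              (\<forall>a. 1/2 < a \<and> a < (real p + 1) / (2 * real p) \<longrightarrow>
                    gamma_rate p \<alpha>' \<le> gamma_rate p a))"
proof -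
  txt \<open>Only (A7) and (A9) are used.\<close>
  obtain Vmin where "pos_def Vmin" and "\<And>\<theta>. \<theta> \<in> T \<Longrightarrow> loewner_le Vmin (V \<theta>)"
    using A7b by blast
  then obtain m where "0 < m" and "event_to_one M (\<lambda>n w. \<forall>\<theta>\<in>T. coercive m (Vn n w \<theta>))"
    using event_to_one_coercive[where W = Vn] A7a by blast
  then have "\<exists>C::real. \<exists>N::nat. \<forall>n\<ge>N. wp_at_least M (\<lambda>w. \<forall>\<theta>\<in>T.
      \<bar>measure (Q n w \<theta>) (supball (s n w) (real n powr (-\<alpha>)))
          / (2 * real n powr (-\<alpha>) * sqrt (real n)) ^ p
        - gauss_pdf (Vn n w \<theta>) (sqrt (real n) *\<^sub>R (s n w - rn n w \<theta>))\<bar>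
      \<le> C * real n powr (gamma_rate p \<alpha>)) \<delta>"
    unfolding rn_def Vn_def p_def
    by (intro measure_supball_density_approx_whp[OF M Q_prob Q_sets] A9[unfolded rn_def Vn_def] \<delta>)
      (simp_all only: Vn_def)
  moreover have "1 \<le> p"
    by (simp add: p_def)
  ultimately show ?thesis
    using gamma_rate_optimal by blast
qed

end
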